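(* If $A\subseteq\mathbb{N}$ is quasicreative, then $\overline{A}=\mathbb{N}\setminus A$ contains an infinite recursively enumerable subset.
   Context: $\varphi_0,\varphi_1,\ldots$ is a standard acceptable enumeration of the partial computable functions $\mathbb{N}\to\mathbb{N}$ and $\mathcal{W}_e=\operatorname{dom}\varphi_e$. $\mathfrak{P}_{\mathrm{fin}}(\mathbb{N})$ is the set of finite subsets of $\mathbb{N}$; $f\colon\mathbb{N}\to\mathfrak{P}_{\mathrm{fin}}(\mathbb{N})$ is computable if $e\mapsto$ (canonical index of $f(e)$) is computable. A recursively enumerable $A$ is quasicreative if there is a computable $f\colon\mathbb{N}\to\mathfrak{P}_{\mathrm{fin}}(\mathbb{N})$ such that for all $e$, if $\mathcal{W}_e\subseteq\overline{A}$ then $f(e)\subseteq\overline{A}$ and there is $z\in f(e)$ with $z\in\overline{A}\setminus\mathcal{W}_e$. *)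

theory Defs
  imports Main "HOL-Library.Nat_Bijection"
begin

datatype recf = Z | S | Id nat | Cn recf "recf list" | Pr recf recf | Mn recf

inductive eval :: "recf \<Rightarrow> nat list \<Rightarrow> nat \<Rightarrow> bool" where
  eval_Z: "eval Z xs 0"
| eval_S: "eval S (x # xs) (Suc x)"
| eval_Id: "i < length xs \<Longrightarrow> eval (Id i) xs (xs ! i)"
| eval_Cn: "list_all2 (\<lambda>g y. eval g xs y) gs ys \<Longrightarrow> eval f ys z \<Longrightarrow> eval (Cn f gs) xs z"
| eval_Pr0: "eval f xs y \<Longrightarrow> eval (Pr f g) (0 # xs) y"
| eval_PrS: "eval (Pr f g) (k # xs) v \<Longrightarrow> eval g (k # v # xs) y \<Longrightarrow> eval (Pr f g) (Suc k # xs) y"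
| eval_Mn: "eval f (y # xs) 0 \<Longrightarrow> (\<forall>z<y. \<exists>v. eval f (z # xs) v \<and> v > 0) \<Longrightarrow> eval (Mn f) xs y"
monos list_all2_mono

primrec encode :: "recf \<Rightarrow> nat" where
  "encode Z = prod_encode (0, 0)"
| "encode S = prod_encode (1, 0)"
| "encode (Id i) = prod_encode (2, i)"
| "encode (Cn f gs) = prod_encode (3, prod_encode (encode f, list_encode (map encode gs)))"
| "encode (Pr f g) = prod_encode (4, prod_encode (encode f, encode g))"
| "encode (Mn f) = prod_encode (5, encode f)"

text \<open>\<open>phi e x y\<close>: the e-th partial computable function \<open>\<phi>_e\<close> maps x to y.
  Numbers that are not codes of terms index the nowhere-defined function.\<close>
definition phi :: "nat \<Rightarrow> nat \<Rightarrow> nat \<Rightarrow> bool" where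
  "phi e x y \<longleftrightarrow> (\<exists>c. encode c = e \<and> eval c [x] y)"

definition W :: "nat \<Rightarrow> nat set" where
  "W e = {x. \<exists>y. phi e x y}"

definition re :: "nat set \<Rightarrow> bool" where
  "re A \<longleftrightarrow> (\<exists>e. A = W e)"

definition total_computable :: "(nat \<Rightarrow> nat) \<Rightarrow> bool" where
  "total_computable g \<longleftrightarrow> (\<exists>e. \<forall>x. phi e x (g x))"

definition canon_index :: "nat set \<Rightarrow> nat" where
  "canon_index D = (\<Sum>x\<in>D. 2 ^ x)"

definition computable_fin :: "(nat \<Rightarrow> nat set) \<Rightarrow> bool" where
  "computable_fin f \<longleftrightarrow> (\<forall>e. finite (f e)) \<and> total_computable (\<lambda>e. canon_index (f e))"

definition quasicreative :: "nat set \<Rightarrow> bool" where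
  "quasicreative A \<longleftrightarrow> re A \<and>
     (\<exists>f. computable_fin f \<and>
        (\<forall>e. W e \<subseteq> - A \<longrightarrow> f e \<subseteq> - A \<and> (\<exists>z\<in>f e. z \<in> - A - W e)))"

end

theory Submission
  imports Defs
begin

text \<open>Iterate the quasicreativity witness \<open>f\<close> on finite sets: \<open>D 0 = {}\<close> and
  \<open>D (n+1) = D n \<union> f (e n)\<close>, where \<open>e n\<close> is an index of \<open>D n\<close> computed from its canonical
  index. Inductively \<open>W (e n) = D n \<subseteq> - A\<close>, so \<open>f (e n)\<close> lies in \<open>- A\<close> and contains a point
  outside \<open>D n\<close>. The chain is strictly increasing, hence its union is an infinite subset of \<open>- A\<close>;
  it is r.e. because the whole iteration is computed by a single recursive term.\<close>

unbundle bit_operations_syntax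

lemma eval_deterministic: "eval c xs y \<Longrightarrow> eval c xs y' \<Longrightarrow> y = y'"
proof (induction arbitrary: y' rule: eval.induct)
  case (eval_Cn xs gs ys f z)
  from eval_Cn.prems obtain ys' where args': "list_all2 (\<lambda>g y. eval g xs y) gs ys'"
    and f': "eval f ys' y'"
    by (cases rule: eval.cases) auto
  have "ys = ys'" using eval_Cn.IH(1) args'
    by (induction gs arbitrary: ys ys') (auto simp: list_all2_Cons1)
  then show ?case using eval_Cn.IH(2) f' by simp
next
  case (eval_Mn f y xs)
  from eval_Mn.prems have zero': "eval f (y' # xs) 0"
    and pos': "\<forall>z<y'. \<exists>v. eval f (z # xs) v \<and> v > 0"
    by (cases rule: eval.cases; blast)+
  show ?case
  proof (rule linorder_cases)
    assume "y < y'"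
    then show ?thesis using pos' eval_Mn.IH(1) by fastforce
  next
    assume "y' < y"
    then show ?thesis using eval_Mn.IH(2) zero' by fastforce
  qed
next
  case (eval_PrS f g k xs v y)
  from eval_PrS.prems obtain v' where "eval (Pr f g) (k # xs) v'" "eval g (k # v' # xs) y'"
    by (cases rule: eval.cases) auto
  then show ?case using eval_PrS.IH by auto
qed (erule eval.cases; auto)+

lemma inj_encode: "inj encode"
proof (rule injI)
  show "encode c = encode d \<Longrightarrow> c = d" for c d
  proof (induction c arbitrary: d)
    case (Cn f gs)
    then obtain f' gs' where "d = Cn f' gs'" and "encode f = encode f'"
      and codes: "map encode gs = map encode gs'"
      by (cases d) (auto simp: list_encode_eq)
    moreover have "gs = gs'" using codes Cn.IH(2)
      by (induction gs arbitrary: gs') (auto simp: Cons_eq_map_conv)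
    ultimately show ?case using Cn.IH(1) by simp
  qed (case_tac d; auto)+
qed

lemma phi_encode_iff: "phi (encode c) x y \<longleftrightarrow> eval c [x] y"
  by (auto simp: phi_def dest: injD[OF inj_encode])

lemma W_encode: "W (encode c) = {x. \<exists>y. eval c [x] y}"
  by (simp add: W_def phi_encode_iff)

lemma total_computable_imp_eval: "total_computable g \<Longrightarrow> \<exists>c. \<forall>x. eval c [x] (g x)"
  unfolding total_computable_def by (metis phi_def phi_encode_iff)

lemma W_encode_Mn:
  assumes g: "\<And>y x. eval f [y, x] (g y x)"
  shows "W (encode (Mn f)) = {x. \<exists>y. g y x = 0}"
proof (rule set_eqI, rule iffI)
  fix x
  assume "x \<in> W (encode (Mn f))"
  then obtain y where "eval (Mn f) [x] y" unfolding W_encode by blast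
  then have "eval f [y, x] 0" by (cases rule: eval.cases) auto
  then show "x \<in> {x. \<exists>y. g y x = 0}" using eval_deterministic g by blast
next
  fix x
  assume "x \<in> {x. \<exists>y. g y x = 0}"
  then have "\<exists>y. g y x = 0" by simp
  then have "g (LEAST y. g y x = 0) x = 0" "\<forall>z < (LEAST y. g y x = 0). g z x > 0"
    by (auto intro: LeastI_ex dest: not_less_Least)
  then have "eval (Mn f) [x] (LEAST y. g y x = 0)"
    using g by (intro eval_Mn) (metis, blast)
  then show "x \<in> W (encode (Mn f))" unfolding W_encode by blast
qed

section \<open>Arithmetic by recursive terms\<close>

text \<open>Evaluation rules with the result as an equational premise, so that chains of them can be
  applied by \<open>intro\<close> and the arithmetic left to the simplifier.\<close>

lemma eval_S_eq: "z = Suc x \<Longrightarrow> eval S [x] z"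
  using eval_S by simp

lemma eval_Id_eq: "i < length xs \<Longrightarrow> z = xs ! i \<Longrightarrow> eval (Id i) xs z"
  using eval_Id by simp

lemma eval_Cn_1: "eval g xs y \<Longrightarrow> eval f [y] z \<Longrightarrow> eval (Cn f [g]) xs z"
  by (rule eval_Cn) auto

lemma eval_Cn_2:
  "eval g\<^sub>1 xs y\<^sub>1 \<Longrightarrow> eval g\<^sub>2 xs y\<^sub>2 \<Longrightarrow> eval f [y\<^sub>1, y\<^sub>2] z \<Longrightarrow> eval (Cn f [g\<^sub>1, g\<^sub>2]) xs z"
  by (rule eval_Cn) auto

lemma eval_Cn_3:
  "eval g\<^sub>1 xs y\<^sub>1 \<Longrightarrow> eval g\<^sub>2 xs y\<^sub>2 \<Longrightarrow> eval g\<^sub>3 xs y\<^sub>3 \<Longrightarrow> eval f [y\<^sub>1, y\<^sub>2, y\<^sub>3] z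
    \<Longrightarrow> eval (Cn f [g\<^sub>1, g\<^sub>2, g\<^sub>3]) xs z"
  by (rule eval_Cn) auto

primrec const_rf :: "nat \<Rightarrow> recf" where
  "const_rf 0 = Z"
| "const_rf (Suc n) = Cn S [const_rf n]"

lemma eval_const_rf: "z = n \<Longrightarrow> eval (const_rf n) xs z"
  by (induction n arbitrary: z) (auto intro: eval_Z eval_Cn_1 eval_S)

lemmas eval_rf_intros = eval_S_eq eval_Id_eq eval_Cn_1 eval_Cn_2 eval_Cn_3 eval_const_rf

definition add_rf :: recf where
  "add_rf = Pr (Id 0) (Cn S [Id 1])"

lemma eval_add_rf: "z = a + b \<Longrightarrow> eval add_rf [a, b] z"
  unfolding add_rf_def
proof (induction a arbitrary: z)
  case 0
  then show ?case by (intro eval_Pr0 eval_rf_intros) (rule refl | simp)+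
next
  case (Suc a)
  then show ?case by (intro eval_PrS[OF Suc.IH[OF refl]] eval_rf_intros) (rule refl | simp)+
qed

definition mul_rf :: recf where
  "mul_rf = Pr Z (Cn add_rf [Id 1, Id 2])"

lemma eval_mul_rf: "z = a * b \<Longrightarrow> eval mul_rf [a, b] z"
  unfolding mul_rf_def
proof (induction a arbitrary: z)
  case 0
  then show ?case by (simp add: eval_Pr0 eval_Z)
next
  case (Suc a)
  then show ?case by (intro eval_PrS[OF Suc.IH[OF refl]] eval_rf_intros eval_add_rf) (rule refl | simp)+
qed

definition pred_rf :: recf where
  "pred_rf = Pr Z (Id 0)"

lemma eval_pred_rf: "z = a - 1 \<Longrightarrow> eval pred_rf [a] z"
  unfolding pred_rf_def
proof (induction a arbitrary: z)
  case 0
  then show ?case by (simp add: eval_Pr0 eval_Z)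
next
  case (Suc a)
  then show ?case by (intro eval_PrS[OF Suc.IH[OF refl]] eval_rf_intros) (rule refl | simp)+
qed

definition diff_rf :: recf where
  "diff_rf = Cn (Pr (Id 0) (Cn pred_rf [Id 1])) [Id 1, Id 0]"

lemma eval_diff_rf: "z = a - b \<Longrightarrow> eval diff_rf [a, b] z"
proof -
  have "eval (Pr (Id 0) (Cn pred_rf [Id 1])) [k, a] (a - k)" for k
  proof (induction k)
    case 0
    then show ?case by (intro eval_Pr0 eval_rf_intros) (rule refl | simp)+
  next
    case (Suc k)
    then show ?case by (intro eval_PrS[OF Suc.IH] eval_rf_intros eval_pred_rf) (rule refl | simp)+
  qed
  then show "z = a - b \<Longrightarrow> eval diff_rf [a, b] z"
    unfolding diff_rf_def by (intro eval_rf_intros) (rule refl | simp)+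
qed

definition max_rf :: recf where
  "max_rf = Cn add_rf [Id 0, Cn diff_rf [Id 1, Id 0]]"

lemma eval_max_rf: "z = max a b \<Longrightarrow> eval max_rf [a, b] z"
  unfolding max_rf_def by (intro eval_rf_intros eval_add_rf eval_diff_rf) (rule refl | simp)+

definition pow2_rf :: recf where
  "pow2_rf = Pr (const_rf 1) (Cn add_rf [Id 1, Id 1])"

lemma eval_pow2_rf: "z = 2 ^ a \<Longrightarrow> eval pow2_rf [a] z"
  unfolding pow2_rf_def
proof (induction a arbitrary: z)
  case 0
  then show ?case by (intro eval_Pr0 eval_rf_intros) (rule refl | simp)+
next
  case (Suc a)
  then show ?case by (intro eval_PrS[OF Suc.IH[OF refl]] eval_rf_intros eval_add_rf) (rule refl | simp)+
qed

definition mod2_rf :: recf where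
  "mod2_rf = Pr Z (Cn diff_rf [const_rf 1, Id 1])"

lemma eval_mod2_rf: "z = a mod 2 \<Longrightarrow> eval mod2_rf [a] z"
  unfolding mod2_rf_def
proof (induction a arbitrary: z)
  case 0
  then show ?case by (simp add: eval_Pr0 eval_Z)
next
  case (Suc a)
  then show ?case
    by (intro eval_PrS[OF Suc.IH[OF refl]] eval_rf_intros eval_diff_rf) (rule refl | simp add: mod_Suc)+
qed

definition half_rf :: recf where
  "half_rf = Pr Z (Cn add_rf [Id 1, Cn mod2_rf [Id 0]])"

lemma eval_half_rf: "z = a div 2 \<Longrightarrow> eval half_rf [a] z"
  unfolding half_rf_def
proof (induction a arbitrary: z)
  case 0
  then show ?case by (simp add: eval_Pr0 eval_Z)
next
  case (Suc a)
  then show ?case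
    by (intro eval_PrS[OF Suc.IH[OF refl]] eval_rf_intros eval_add_rf eval_mod2_rf) (rule refl | simp | presburger)+
qed

definition div_pow2_rf :: recf where
  "div_pow2_rf = Pr (Id 0) (Cn half_rf [Id 1])"

lemma eval_div_pow2_rf: "z = a div 2 ^ k \<Longrightarrow> eval div_pow2_rf [k, a] z"
  unfolding div_pow2_rf_def
proof (induction k arbitrary: z)
  case 0
  then show ?case by (intro eval_Pr0 eval_rf_intros) (rule refl | simp)+
next
  case (Suc k)
  have "a div 2 ^ Suc k = a div 2 ^ k div 2"
    by (metis div_mult2_eq mult.commute power_Suc)
  then show ?case unfolding Suc.prems
    by (intro eval_PrS[OF Suc.IH[OF refl]] eval_rf_intros eval_half_rf) (rule refl | simp)+
qed

definition bit_rf :: recf where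
  "bit_rf = Cn mod2_rf [div_pow2_rf]"

lemma eval_bit_rf: "z = of_bool (bit a k) \<Longrightarrow> eval bit_rf [k, a] z"
  unfolding bit_rf_def bit_iff_odd of_bool_odd_eq_mod_2
  by (intro eval_rf_intros eval_mod2_rf eval_div_pow2_rf) (rule refl | simp)+

section \<open>Canonical indices of finite sets\<close>

definition canon_set :: "nat \<Rightarrow> nat set" where
  "canon_set v = {x. bit v x}"

lemma bit_imp_less: "bit (v::nat) x \<Longrightarrow> x < v"
proof -
  assume "bit v x"
  then have "v div 2 ^ x \<noteq> 0" by (auto simp: bit_iff_odd intro: odd_pos)
  then have "2 ^ x \<le> v" by (simp add: div_eq_0_iff)
  then show "x < v" using less_exp[of x] by linarith
qed

lemma bit_canon_index: "finite D \<Longrightarrow> bit (canon_index D) x \<longleftrightarrow> x \<in> D"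
proof (induction D arbitrary: x rule: finite_induct)
  case empty
  then show ?case by (simp add: canon_index_def)
next
  case (insert i D)
  have "canon_index (insert i D) = 2 ^ i + canon_index D"
    using insert.hyps by (simp add: canon_index_def)
  moreover have "\<not> bit (2 ^ i :: nat) n \<or> \<not> bit (canon_index D) n" for n
    using insert by (auto simp: bit_exp_iff)
  ultimately show ?case
    using insert.IH by (auto simp: bit_disjunctive_add_iff bit_exp_iff)
qed

lemma canon_set_canon_index: "finite D \<Longrightarrow> canon_set (canon_index D) = D"
  by (simp add: canon_set_def bit_canon_index)

lemma canon_set_or: "canon_set (a OR b) = canon_set a \<union> canon_set b"
  by (auto simp: canon_set_def bit_or_iff)

text \<open>The bits of \<open>a OR b\<close> lie below \<open>a + b\<close>, which makes the disjunction primitive recursive.\<close>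

lemma or_eq_sum: "a OR b = (\<Sum>i<a + b. 2 ^ i * max (of_bool (bit a i)) (of_bool (bit b i)))"
proof -
  let ?E = "{i. i < a + b \<and> (bit a i \<or> bit b i)}"
  have "a OR b = canon_index ?E"
    by (rule bit_eqI) (auto simp: bit_or_iff bit_canon_index dest: bit_imp_less)
  also have "\<dots> = (\<Sum>i<a + b. 2 ^ i * max (of_bool (bit a i)) (of_bool (bit b i)))"
    unfolding canon_index_def by (rule sum.mono_neutral_cong_left) auto
  finally show ?thesis .
qed

definition or_sum_rf :: recf where
  "or_sum_rf = Pr Z (Cn add_rf [Id 1, Cn mul_rf [Cn pow2_rf [Id 0],
     Cn max_rf [Cn bit_rf [Id 0, Id 2], Cn bit_rf [Id 0, Id 3]]]])"

lemma eval_or_sum_rf: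
  "z = (\<Sum>i<m. 2 ^ i * max (of_bool (bit a i)) (of_bool (bit b i))) \<Longrightarrow> eval or_sum_rf [m, a, b] z"
  unfolding or_sum_rf_def
proof (induction m arbitrary: z)
  case 0
  then show ?case by (simp add: eval_Pr0 eval_Z)
next
  case (Suc m)
  then show ?case
    by (intro eval_PrS[OF Suc.IH[OF refl]] eval_rf_intros eval_add_rf eval_mul_rf eval_pow2_rf
        eval_max_rf eval_bit_rf) (rule refl | simp)+
qed

definition or_rf :: recf where
  "or_rf = Cn or_sum_rf [add_rf, Id 0, Id 1]"

lemma eval_or_rf: "z = a OR b \<Longrightarrow> eval or_rf [a, b] z"
  unfolding or_rf_def or_eq_sum
  by (intro eval_rf_intros eval_add_rf eval_or_sum_rf) (rule refl | simp)+

section \<open>An index of a finite set, computed from its canonical index\<close>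

definition not_bit_rf :: recf where
  "not_bit_rf = Cn diff_rf [const_rf 1, bit_rf]"

lemma eval_not_bit_rf: "z = of_bool (\<not> bit a k) \<Longrightarrow> eval not_bit_rf [k, a] z"
  unfolding not_bit_rf_def by (intro eval_rf_intros eval_diff_rf eval_bit_rf) (rule refl | simp)+

definition fin_rf :: "nat \<Rightarrow> recf" where
  "fin_rf v = Mn (Cn not_bit_rf [Id 1, const_rf v])"

lemma W_fin_rf: "W (encode (fin_rf v)) = canon_set v"
proof -
  have "eval (Cn not_bit_rf [Id 1, const_rf v]) [y, x] (of_bool (\<not> bit v x))" for y x
    by (intro eval_rf_intros eval_not_bit_rf) (rule refl | simp)+
  from W_encode_Mn[OF this] show ?thesis by (simp add: fin_rf_def canon_set_def)
qed

definition triangle_rf :: recf where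
  "triangle_rf = Pr Z (Cn add_rf [Id 1, Cn S [Id 0]])"

lemma eval_triangle_rf: "z = triangle n \<Longrightarrow> eval triangle_rf [n] z"
  unfolding triangle_rf_def
proof (induction n arbitrary: z)
  case 0
  then show ?case by (simp add: eval_Pr0 eval_Z)
next
  case (Suc n)
  then show ?case by (intro eval_PrS[OF Suc.IH[OF refl]] eval_rf_intros eval_add_rf) (rule refl | simp)+
qed

definition pair_rf :: recf where
  "pair_rf = Cn add_rf [Cn triangle_rf [add_rf], Id 0]"

lemma eval_pair_rf: "z = prod_encode (a, b) \<Longrightarrow> eval pair_rf [a, b] z"
  unfolding pair_rf_def prod_encode_def
  by (intro eval_rf_intros eval_add_rf eval_triangle_rf) (rule refl | simp)+

definition encode_const_rf :: recf where
  "encode_const_rf = Pr (const_rf (encode Z))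
     (Cn pair_rf [const_rf 3, Cn pair_rf [const_rf (encode S), Cn S [Cn pair_rf [Id 1, const_rf 0]]]])"

lemma eval_encode_const_rf: "z = encode (const_rf n) \<Longrightarrow> eval encode_const_rf [n] z"
  unfolding encode_const_rf_def
proof (induction n arbitrary: z)
  case 0
  then show ?case by (intro eval_Pr0 eval_rf_intros) (rule refl | simp)+
next
  case (Suc n)
  then show ?case by (intro eval_PrS[OF Suc.IH[OF refl]] eval_rf_intros eval_pair_rf) (rule refl | simp)+
qed

text \<open>A hand-made instance of the s-m-n theorem: the code of \<open>fin_rf v\<close> assembled from \<open>v\<close>.\<close>

definition fin_index_rf :: recf where
  "fin_index_rf = Cn pair_rf [const_rf 5, Cn pair_rf [const_rf 3, Cn pair_rf [const_rf (encode not_bit_rf),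
     Cn S [Cn pair_rf [const_rf (encode (Id 1)), Cn S [Cn pair_rf [encode_const_rf, const_rf 0]]]]]]]"

lemma eval_fin_index_rf: "z = encode (fin_rf v) \<Longrightarrow> eval fin_index_rf [v] z"
  unfolding fin_index_rf_def fin_rf_def
  by (intro eval_rf_intros eval_pair_rf eval_encode_const_rf) (rule refl | simp)+

section \<open>Enumerating an iterated union of finite sets\<close>

text \<open>On canonical indices \<open>OR\<close> is union, so \<open>union_iter F n\<close> codes the \<open>n\<close>-th set of the chain
  \<open>D\<close>, with \<open>F\<close> the canonical-index form of \<open>f\<close>.\<close>

primrec union_iter :: "(nat \<Rightarrow> nat) \<Rightarrow> nat \<Rightarrow> nat" where
  "union_iter F 0 = 0"
| "union_iter F (Suc n) = union_iter F n OR F (encode (fin_rf (union_iter F n)))"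

definition union_iter_rf :: "recf \<Rightarrow> recf" where
  "union_iter_rf c = Pr Z (Cn or_rf [Id 1, Cn c [Cn fin_index_rf [Id 1]]])"

lemma eval_union_iter_rf:
  assumes "\<And>x. eval c [x] (F x)"
  shows "z = union_iter F n \<Longrightarrow> eval (union_iter_rf c) [n] z"
  unfolding union_iter_rf_def
proof (induction n arbitrary: z)
  case 0
  then show ?case by (simp add: eval_Pr0 eval_Z)
next
  case (Suc n)
  have eval_c: "z = F x \<Longrightarrow> eval c [x] z" for x z using assms by simp
  from Suc show ?case
    by (intro eval_PrS[OF Suc.IH[OF refl]] eval_rf_intros eval_or_rf eval_fin_index_rf eval_c)
      (rule refl | simp)+
qed

lemma re_UN_union_iter:
  assumes "total_computable F"
  shows "re (\<Union>n. canon_set (union_iter F n))"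
proof -
  obtain c where c: "\<And>x. eval c [x] (F x)"
    using total_computable_imp_eval[OF assms] by blast
  have "eval (Cn not_bit_rf [Id 1, Cn (union_iter_rf c) [Id 0]]) [n, x]
      (of_bool (\<not> bit (union_iter F n) x))" for n x
    by (intro eval_rf_intros eval_not_bit_rf eval_union_iter_rf[OF c]) (rule refl | simp)+
  then have "W (encode (Mn (Cn not_bit_rf [Id 1, Cn (union_iter_rf c) [Id 0]])))
      = (\<Union>n. canon_set (union_iter F n))"
    by (subst W_encode_Mn) (auto simp: canon_set_def)
  then show ?thesis unfolding re_def by metis
qed

lemma infinite_UN_strict_chain:
  assumes strict: "\<And>n. C n \<subset> C (Suc n)"
  shows "infinite (\<Union>n. C n)"
proof
  assume fin: "finite (\<Union>n. C n)"
  have "n \<le> card (C n)" for n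
  proof (induction n)
    case (Suc n)
    have "finite (C (Suc n))" using fin by (rule finite_subset[rotated]) blast
    then have "card (C n) < card (C (Suc n))" using strict by (rule psubset_card_mono)
    with Suc.IH show ?case by simp
  qed simp
  moreover have "card (C n) \<le> card (\<Union>n. C n)" for n
    using fin by (rule card_mono) blast
  ultimately have "Suc (card (\<Union>n. C n)) \<le> card (\<Union>n. C n)"
    using le_trans by blast
  then show False by simp
qed

theorem mainTheorem5:
  fixes A :: "nat set"
  assumes "quasicreative A"
  shows "\<exists>B. re B \<and> infinite B \<and> B \<subseteq> - A"
proof -
  obtain f where f: "computable_fin f"
    and witness: "\<And>e. W e \<subseteq> - A \<Longrightarrow> f e \<subseteq> - A \<and> (\<exists>z\<in>f e. z \<in> - A - W e)"
    using assms unfolding quasicreative_def by blast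
  define F where "F e = canon_index (f e)" for e
  define C where "C n = canon_set (union_iter F n)" for n
  have W_C: "W (encode (fin_rf (union_iter F n))) = C n" for n
    by (simp add: C_def W_fin_rf)
  have C_Suc: "C (Suc n) = C n \<union> f (encode (fin_rf (union_iter F n)))" for n
    using f by (simp add: C_def F_def canon_set_or canon_set_canon_index computable_fin_def)
  have C_sub: "C n \<subseteq> - A" for n
  proof (induction n)
    case 0
    show ?case by (simp add: C_def canon_set_def)
  next
    case (Suc n)
    then show ?case using witness[of "encode (fin_rf (union_iter F n))"] by (simp add: C_Suc W_C)
  qed
  have "C n \<subset> C (Suc n)" for n
    using witness[of "encode (fin_rf (union_iter F n))"] C_sub[of n] by (auto simp: C_Suc W_C)
  then have "infinite (\<Union>n. C n)" by (rule infinite_UN_strict_chain)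
  moreover have "re (\<Union>n. C n)"
    using f unfolding C_def F_def computable_fin_def by (intro re_UN_union_iter) simp
  ultimately show ?thesis using C_sub by blast
qed

end
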